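(* Consider the continuous-stage Runge–Kutta–Nyström (csRKN) method with coefficients $(\bar{A}_{\tau,\sigma},\bar{B}_\tau,B_\tau,C_\tau)$ applied to $q''=f(t,q)$. Suppose that for all $\tau,\sigma\in[0,1]$ \begin{align*} C_\tau&=1-C_{1-\tau},\\ \bar{A}_{\tau,\sigma}&=B_{1-\sigma}(1-C_{1-\tau})-\bar{B}_{1-\sigma}+\bar{A}_{1-\tau,1-\sigma},\\ \bar{B}_\tau&=B_{1-\tau}-\bar{B}_{1-\tau},\\ B_\tau&=B_{1-\tau}. \end{align*} Then the csRKN method is symmetric.
   Context: Consider the initial value problem $q''=f(t,q)$, $q(t_0)=q_0$, $q'(t_0)=q'_0$, where $f:\mathbb{R}\times\mathbb{R}^d\to\mathbb{R}^d$ is smooth. Let $\bar{A}_{\tau,\sigma}$ be a (sufficiently regular, e.g. integrable/continuous) real function of $\tau,\sigma\in[0,1]$ and $\bar{B}_\tau,B_\tau,C_\tau$ real functions of $\tau\in[0,1]$. The csRKN method with step size $h$ maps $(q_0,q'_0)$ to $(q_1,q'_1)$ by $$Q_\tau=q_0+hC_\tau q'_0+h^2\int_0^1\bar{A}_{\tau,\sigma}f(t_0+C_\sigma h,Q_\sigma)\,d\sigma,\quad \tau\in[0,1],$$ $$q_1=q_0+hq'_0+h^2\int_0^1\bar{B}_\tau f(t_0+C_\tau h,Q_\tau)\,d\tau,\qquad q'_1=q'_0+h\int_0^1 B_\tau f(t_0+C_\tau h,Q_\tau)\,d\tau,$$ with $t_1=t_0+h$. A one-step method $\Phi_h$ is called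 symmetric if $\Phi_h^*=\Phi_h$, where the adjoint method is $\Phi_h^*=\Phi_{-h}^{-1}$; equivalently, exchanging $h\leftrightarrow -h$, $(q_0,q'_0)\leftrightarrow(q_1,q'_1)$ and $t_0\leftrightarrow t_1$ in the defining equations yields the same method. *)

theory Defs
  imports "HOL-Analysis.Analysis"
begin

text \<open>Since the method is implicit, it is modelled as a relation: there exists a
  (continuous) stage function Q on [0,1] satisfying the stage equations.\<close>
definition csRKN_step ::
  "(real \<Rightarrow> real \<Rightarrow> real) \<Rightarrow> (real \<Rightarrow> real) \<Rightarrow> (real \<Rightarrow> real) \<Rightarrow> (real \<Rightarrow> real)
   \<Rightarrow> (real \<Rightarrow> 'a::euclidean_space \<Rightarrow> 'a) \<Rightarrow> real \<Rightarrow> real \<Rightarrow> 'a \<Rightarrow> 'a \<Rightarrow> 'a \<Rightarrow> 'a \<Rightarrow> bool"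
where
  "csRKN_step Abar Bbar B C f h t0 q0 p0 q1 p1 \<longleftrightarrow>
     (\<exists>Q :: real \<Rightarrow> 'a.
        continuous_on {0..1} Q \<and>
        (\<forall>\<tau>\<in>{0..1}. Q \<tau> = q0 + (h * C \<tau>) *\<^sub>R p0
            + h\<^sup>2 *\<^sub>R integral {0..1} (\<lambda>\<sigma>. Abar \<tau> \<sigma> *\<^sub>R f (t0 + C \<sigma> * h) (Q \<sigma>))) \<and>
        q1 = q0 + h *\<^sub>R p0
            + h\<^sup>2 *\<^sub>R integral {0..1} (\<lambda>\<tau>. Bbar \<tau> *\<^sub>R f (t0 + C \<tau> * h) (Q \<tau>)) \<and>
        p1 = p0 + h *\<^sub>R integral {0..1} (\<lambda>\<tau>. B \<tau> *\<^sub>R f (t0 + C \<tau> * h) (Q \<tau>)))"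

text \<open>Symmetry: the method coincides with its adjoint \<Phi>_{-h}^{-1}, i.e. exchanging
  h and -h, (q0,p0) and (q1,p1), t0 and t1 = t0 + h gives the same method.\<close>
definition csRKN_symmetric ::
  "(real \<Rightarrow> real \<Rightarrow> real) \<Rightarrow> (real \<Rightarrow> real) \<Rightarrow> (real \<Rightarrow> real) \<Rightarrow> (real \<Rightarrow> real)
   \<Rightarrow> (real \<Rightarrow> 'a::euclidean_space \<Rightarrow> 'a) \<Rightarrow> bool"
where
  "csRKN_symmetric Abar Bbar B C f \<longleftrightarrow>
     (\<forall>h t0 q0 p0 q1 p1.
        csRKN_step Abar Bbar B C f h t0 q0 p0 q1 p1 \<longleftrightarrow>
        csRKN_step Abar Bbar B C f (- h) (t0 + h) q1 p1 q0 p0)"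

end

theory Submission
  imports Defs
begin

text \<open>Reflecting the stage variable, \<open>\<tau> \<mapsto> 1 - \<tau>\<close>, turns a step from \<open>(t\<^sub>0, q\<^sub>0, q'\<^sub>0)\<close>
  with step size \<open>h\<close> into a step from \<open>(t\<^sub>1, q\<^sub>1, q'\<^sub>1)\<close> with step size \<open>-h\<close>: the stage
  \<open>Q\<^sub>\<tau>\<close> of the original step serves as stage \<open>1 - \<tau>\<close> of the reversed one, because
  \<open>t\<^sub>1 - C(\<tau>) h = t\<^sub>0 + C(1 - \<tau>) h\<close>. After the substitution \<open>\<sigma> \<mapsto> 1 - \<sigma>\<close> in the
  integrals, the reflection identities for the coefficients turn the stage and update
  equations of the reversed step into those of the original one. Since
  reversing twice gives back the original step, one direction suffices.\<close>

lemma integral_reflect_Icc: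
  fixes g :: "real \<Rightarrow> 'a::euclidean_space"
  shows "integral {a..b} (\<lambda>s. g (a + b - s)) = integral {a..b} g"
proof -
  have "integral {a..b} (\<lambda>s. g (a + b - s)) = integral {-b..-a} (\<lambda>x. g (x + (a + b)))"
    using Henstock_Kurzweil_Integration.integral_reflect_real[of b a "\<lambda>s. g (a + b - s)"]
    by (simp add: add.commute)
  also have "\<dots> = integral {a..b} g"
    using integral_shift_real_ivl[of a "a + b" b g] by simp
  finally show ?thesis .
qed

lemma continuous_on_reflect_Icc:
  fixes g :: "real \<Rightarrow> 'a::topological_space"
  assumes "continuous_on {a..b} g"
  shows "continuous_on {a..b} (\<lambda>s. g (a + b - s))"
  by (rule continuous_on_compose2[OF assms]) (auto intro!: continuous_intros)

lemma continuous_on_stage_values: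
  fixes f :: "real \<Rightarrow> 'a::topological_space \<Rightarrow> 'b::topological_space"
  assumes "continuous_on UNIV (\<lambda>(t, x). f t x)" "continuous_on S C" "continuous_on S Q"
  shows "continuous_on S (\<lambda>s. f (t0 + C s * h) (Q s))"
proof -
  have "continuous_on S (\<lambda>s. (t0 + C s * h, Q s))"
    by (intro continuous_intros assms(2,3))
  from continuous_on_compose[OF this continuous_on_subset[OF assms(1)]]
  show ?thesis by (simp add: o_def)
qed

lemma integrable_weighted_continuous:
  fixes F :: "real \<Rightarrow> 'a::euclidean_space"
  assumes "continuous_on {a..b} w" "continuous_on {a..b} F"
  shows "(\<lambda>s. w s *\<^sub>R F s) integrable_on {a..b}"
  by (rule integrable_continuous_real) (intro continuous_intros assms)

lemma integral_Bbar_reflect: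
  fixes F :: "real \<Rightarrow> 'a::euclidean_space"
  assumes hBbar: "\<forall>\<tau>\<in>{0..1}. Bbar \<tau> = B (1 - \<tau>) - Bbar (1 - \<tau>)"
    and "continuous_on {0..1} B" "continuous_on {0..1} Bbar" "continuous_on {0..1} F"
  shows "integral {0..1} (\<lambda>s. Bbar (1 - s) *\<^sub>R F s)
           = integral {0..1} (\<lambda>s. B s *\<^sub>R F s) - integral {0..1} (\<lambda>s. Bbar s *\<^sub>R F s)"
proof -
  have "integral {0..1} (\<lambda>s. Bbar (1 - s) *\<^sub>R F s)
      = integral {0..1} (\<lambda>s. B s *\<^sub>R F s - Bbar s *\<^sub>R F s)"
  proof (rule integral_cong)
    fix s :: real assume "s \<in> {0..1}"
    then have "Bbar (1 - s) = B s - Bbar s" using hBbar[rule_format, of "1 - s"] by simp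
    then show "Bbar (1 - s) *\<^sub>R F s = B s *\<^sub>R F s - Bbar s *\<^sub>R F s"
      by (simp add: scaleR_diff_left)
  qed
  also have "\<dots> = integral {0..1} (\<lambda>s. B s *\<^sub>R F s) - integral {0..1} (\<lambda>s. Bbar s *\<^sub>R F s)"
    by (intro integral_diff integrable_weighted_continuous assms(2-4))
  finally show ?thesis .
qed

lemma integral_Abar_reflect:
  fixes F :: "real \<Rightarrow> 'a::euclidean_space"
  assumes hA: "\<forall>\<tau>\<in>{0..1}. \<forall>\<sigma>\<in>{0..1}.
               Abar \<tau> \<sigma> = B (1 - \<sigma>) * (1 - C (1 - \<tau>)) - Bbar (1 - \<sigma>) + Abar (1 - \<tau>) (1 - \<sigma>)"
    and \<tau>: "\<tau> \<in> {0..1}"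
    and "continuous_on {0..1} B" "continuous_on {0..1} Bbar" "continuous_on {0..1} (Abar (1 - \<tau>))"
    and "continuous_on {0..1} F"
  shows "integral {0..1} (\<lambda>s. Abar \<tau> (1 - s) *\<^sub>R F s)
           = (1 - C (1 - \<tau>)) *\<^sub>R integral {0..1} (\<lambda>s. B s *\<^sub>R F s)
             - integral {0..1} (\<lambda>s. Bbar s *\<^sub>R F s)
             + integral {0..1} (\<lambda>s. Abar (1 - \<tau>) s *\<^sub>R F s)"
proof -
  let ?c = "1 - C (1 - \<tau>)"
  have "integral {0..1} (\<lambda>s. Abar \<tau> (1 - s) *\<^sub>R F s)
      = integral {0..1} (\<lambda>s. ?c *\<^sub>R (B s *\<^sub>R F s) - Bbar s *\<^sub>R F s + Abar (1 - \<tau>) s *\<^sub>R F s)"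
  proof (rule integral_cong)
    fix s :: real assume "s \<in> {0..1}"
    then have eq: "Abar \<tau> (1 - s) = B s * ?c - Bbar s + Abar (1 - \<tau>) s"
      using hA \<tau> by fastforce
    show "Abar \<tau> (1 - s) *\<^sub>R F s = ?c *\<^sub>R (B s *\<^sub>R F s) - Bbar s *\<^sub>R F s + Abar (1 - \<tau>) s *\<^sub>R F s"
      unfolding eq by (simp add: algebra_simps)
  qed
  also have "\<dots> = ?c *\<^sub>R integral {0..1} (\<lambda>s. B s *\<^sub>R F s) - integral {0..1} (\<lambda>s. Bbar s *\<^sub>R F s)
      + integral {0..1} (\<lambda>s. Abar (1 - \<tau>) s *\<^sub>R F s)"
  proof -
    have iB: "(\<lambda>s. ?c *\<^sub>R (B s *\<^sub>R F s)) integrable_on {0..1}"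
      by (intro integrable_cmul integrable_weighted_continuous assms(3,6))
    have iBbar: "(\<lambda>s. Bbar s *\<^sub>R F s) integrable_on {0..1}"
      by (intro integrable_weighted_continuous assms(4,6))
    have iA: "(\<lambda>s. Abar (1 - \<tau>) s *\<^sub>R F s) integrable_on {0..1}"
      by (intro integrable_weighted_continuous assms(5,6))
    show ?thesis
      by (simp only: integral_add[OF integrable_diff[OF iB iBbar] iA] integral_diff[OF iB iBbar]
          integral_cmul)
  qed
  finally show ?thesis .
qed

lemma integral_B_reflect:
  fixes F :: "real \<Rightarrow> 'a::euclidean_space"
  assumes hB: "\<forall>\<tau>\<in>{0..1}. B \<tau> = B (1 - \<tau>)"
  shows "integral {0..1} (\<lambda>s. B (1 - s) *\<^sub>R F s) = integral {0..1} (\<lambda>s. B s *\<^sub>R F s)"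
proof (rule integral_cong)
  fix s :: real assume "s \<in> {0..1}"
  then show "B (1 - s) *\<^sub>R F s = B s *\<^sub>R F s" using hB by metis
qed

lemma integral_reversed_stages:
  fixes C w :: "real \<Rightarrow> real" and f :: "real \<Rightarrow> 'a \<Rightarrow> 'b::euclidean_space"
  assumes hC: "\<forall>\<tau>\<in>{0..1}. C \<tau> = 1 - C (1 - \<tau>)"
  shows "integral {0..1} (\<lambda>\<sigma>. w \<sigma> *\<^sub>R f (t + h + C \<sigma> * - h) (Q (1 - \<sigma>)))
           = integral {0..1} (\<lambda>\<sigma>. w (1 - \<sigma>) *\<^sub>R f (t + C \<sigma> * h) (Q \<sigma>))"
    (is "_ = integral _ ?G")
proof -
  have "integral {0..1} (\<lambda>\<sigma>. w \<sigma> *\<^sub>R f (t + h + C \<sigma> * - h) (Q (1 - \<sigma>)))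
      = integral {0..1} (\<lambda>\<sigma>. ?G (1 - \<sigma>))"
  proof (rule integral_cong)
    fix \<sigma> :: real assume "\<sigma> \<in> {0..1}"
    then have eq: "t + h + C \<sigma> * - h = t + C (1 - \<sigma>) * h"
      using hC by (simp add: algebra_simps flip: distrib_left)
    show "w \<sigma> *\<^sub>R f (t + h + C \<sigma> * - h) (Q (1 - \<sigma>)) = ?G (1 - \<sigma>)"
      unfolding eq by simp
  qed
  also have "\<dots> = integral {0..1} ?G"
    using integral_reflect_Icc[of 0 1 ?G] by simp
  finally show ?thesis .
qed

lemma csRKN_step_reverse:
  fixes Abar :: "real \<Rightarrow> real \<Rightarrow> real" and Bbar B C :: "real \<Rightarrow> real"
    and f :: "real \<Rightarrow> 'a::euclidean_space \<Rightarrow> 'a"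
  assumes f_cont: "continuous_on UNIV (\<lambda>(t, x). f t x)"
    and A_cont: "\<forall>\<tau>\<in>{0..1}. continuous_on {0..1} (Abar \<tau>)"
    and Bbar_cont: "continuous_on {0..1} Bbar"
    and B_cont: "continuous_on {0..1} B"
    and C_cont: "continuous_on {0..1} C"
    and hC: "\<forall>\<tau>\<in>{0..1}. C \<tau> = 1 - C (1 - \<tau>)"
    and hA: "\<forall>\<tau>\<in>{0..1}. \<forall>\<sigma>\<in>{0..1}.
               Abar \<tau> \<sigma> = B (1 - \<sigma>) * (1 - C (1 - \<tau>)) - Bbar (1 - \<sigma>) + Abar (1 - \<tau>) (1 - \<sigma>)"
    and hBbar: "\<forall>\<tau>\<in>{0..1}. Bbar \<tau> = B (1 - \<tau>) - Bbar (1 - \<tau>)"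
    and hB: "\<forall>\<tau>\<in>{0..1}. B \<tau> = B (1 - \<tau>)"
    and step: "csRKN_step Abar Bbar B C f h t0 q0 p0 q1 p1"
  shows "csRKN_step Abar Bbar B C f (- h) (t0 + h) q1 p1 q0 p0"
proof -
  obtain Q where Q_cont: "continuous_on {0..1} Q"
    and Q_eq: "\<forall>\<tau>\<in>{0..1}. Q \<tau> = q0 + (h * C \<tau>) *\<^sub>R p0
            + h\<^sup>2 *\<^sub>R integral {0..1} (\<lambda>\<sigma>. Abar \<tau> \<sigma> *\<^sub>R f (t0 + C \<sigma> * h) (Q \<sigma>))"
    and q1: "q1 = q0 + h *\<^sub>R p0
            + h\<^sup>2 *\<^sub>R integral {0..1} (\<lambda>\<tau>. Bbar \<tau> *\<^sub>R f (t0 + C \<tau> * h) (Q \<tau>))"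
    and p1: "p1 = p0 + h *\<^sub>R integral {0..1} (\<lambda>\<tau>. B \<tau> *\<^sub>R f (t0 + C \<tau> * h) (Q \<tau>))"
    using step unfolding csRKN_step_def by blast
  define F where "F s = f (t0 + C s * h) (Q s)" for s
  have F_cont: "continuous_on {0..1} F"
    unfolding F_def by (rule continuous_on_stage_values[OF f_cont C_cont Q_cont])
  note IB = integral_B_reflect[OF hB]
  note reversed_stage_integral =
    integral_reversed_stages[OF hC, where t=t0 and h=h and f=f and Q=Q, folded F_def]
  note IBbar = integral_Bbar_reflect[OF hBbar B_cont Bbar_cont F_cont]
  show ?thesis
    unfolding csRKN_step_def
  proof (intro exI[where x="\<lambda>s. Q (1 - s)"] conjI ballI)
    show "continuous_on {0..1} (\<lambda>s. Q (1 - s))"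
      using continuous_on_reflect_Icc[OF Q_cont] by simp
  next
    fix \<tau> :: real assume \<tau>: "\<tau> \<in> {0..1}"
    then have "1 - \<tau> \<in> {0..1}" by auto
    then have Q_reflected: "Q (1 - \<tau>) = q0 + (h * C (1 - \<tau>)) *\<^sub>R p0
        + h\<^sup>2 *\<^sub>R integral {0..1} (\<lambda>s. Abar (1 - \<tau>) s *\<^sub>R F s)"
      using Q_eq by (simp add: F_def)
    note IAbar = integral_Abar_reflect[OF hA \<tau> B_cont Bbar_cont
        A_cont[rule_format, OF \<open>1 - \<tau> \<in> {0..1}\<close>] F_cont]
    have C_reflected: "C \<tau> = 1 - C (1 - \<tau>)" using hC \<tau> by blast
    show "Q (1 - \<tau>) = q1 + (- h * C \<tau>) *\<^sub>R p1 +
         (- h)\<^sup>2 *\<^sub>R integral {0..1} (\<lambda>\<sigma>. Abar \<tau> \<sigma> *\<^sub>R f (t0 + h + C \<sigma> * - h) (Q (1 - \<sigma>)))"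
      unfolding reversed_stage_integral IAbar Q_reflected q1 p1 F_def[symmetric] C_reflected
      by (simp add: algebra_simps power2_eq_square)
  next
    show "q0 = q1 + - h *\<^sub>R p1 +
         (- h)\<^sup>2 *\<^sub>R integral {0..1} (\<lambda>\<sigma>. Bbar \<sigma> *\<^sub>R f (t0 + h + C \<sigma> * - h) (Q (1 - \<sigma>)))"
      unfolding reversed_stage_integral IBbar q1 p1 F_def[symmetric]
      by (simp add: algebra_simps power2_eq_square)
  next
    show "p0 = p1 + - h *\<^sub>R integral {0..1} (\<lambda>\<sigma>. B \<sigma> *\<^sub>R f (t0 + h + C \<sigma> * - h) (Q (1 - \<sigma>)))"
      unfolding reversed_stage_integral IB p1 F_def[symmetric]
      by (simp add: algebra_simps)
  qed
qed

theorem theorem3p2: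
  fixes Abar :: "real \<Rightarrow> real \<Rightarrow> real" and Bbar B C :: "real \<Rightarrow> real"
    and f :: "real \<Rightarrow> 'a::euclidean_space \<Rightarrow> 'a"
  assumes f_cont: "continuous_on UNIV (\<lambda>(t, x). f t x)"
    and A_cont: "\<forall>\<tau>\<in>{0..1}. continuous_on {0..1} (Abar \<tau>)"
    and Bbar_cont: "continuous_on {0..1} Bbar"
    and B_cont: "continuous_on {0..1} B"
    and C_cont: "continuous_on {0..1} C"
    and hC: "\<forall>\<tau>\<in>{0..1}. C \<tau> = 1 - C (1 - \<tau>)"
    and hA: "\<forall>\<tau>\<in>{0..1}. \<forall>\<sigma>\<in>{0..1}.
               Abar \<tau> \<sigma> = B (1 - \<sigma>) * (1 - C (1 - \<tau>)) - Bbar (1 - \<sigma>) + Abar (1 - \<tau>) (1 - \<sigma>)"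
    and hBbar: "\<forall>\<tau>\<in>{0..1}. Bbar \<tau> = B (1 - \<tau>) - Bbar (1 - \<tau>)"
    and hB: "\<forall>\<tau>\<in>{0..1}. B \<tau> = B (1 - \<tau>)"
  shows "csRKN_symmetric Abar Bbar B C f"
  unfolding csRKN_symmetric_def
proof (intro allI iffI)
  fix h t0 q0 p0 q1 p1
  show "csRKN_step Abar Bbar B C f (- h) (t0 + h) q1 p1 q0 p0"
    if "csRKN_step Abar Bbar B C f h t0 q0 p0 q1 p1"
    using csRKN_step_reverse[OF assms that] .
  show "csRKN_step Abar Bbar B C f h t0 q0 p0 q1 p1"
    if "csRKN_step Abar Bbar B C f (- h) (t0 + h) q1 p1 q0 p0"
    using csRKN_step_reverse[OF assms that] by simp
qed

end
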